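(* Let $G$ be a compactly generated t.d.l.c. group and $(K,S)$ a generating pair of $G$. If there exists a proper almost $(G,K)$-invariant set $B\subseteq G/K$, then $e(G)>1$.
   Context: A generating pair $(K,S)$ consists of a compact open subgroup $K$ and a finite symmetric set $S\subset G\setminus K$ such that $S\cup K$ generates $G$. The rough Cayley graph $\Gamma(G,K,S)$ has vertex set $G/K$ and an edge joining $gK$ and $gsK$ for all $g\in G$, $s\in S$. The number of ends of a connected locally finite graph is the supremum over finite vertex sets $F$ of the number of infinite components after deleting $F$ and incident edges; $e(G)$ is the number of ends of a rough Cayley graph of $G$. A subset $B\subseteq G/K$ is almost $(G,K)$-invariant if $kB=B$ for all $k\in K$ and the symmetric difference $gB\,\triangle\,B$ is finite for all $g\in G$; it is proper if both $B$ and its complement $G/K\setminus B$ are infinite. *)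

theory Defs
  imports "HOL-Analysis.Analysis"
begin

text \<open>The group G is a type of class topological_group_add (a possibly
non-commutative group, written additively) which is Hausdorff.\<close>

definition is_subgroup :: "'g::group_add set \<Rightarrow> bool" where
  "is_subgroup H \<longleftrightarrow> 0 \<in> H \<and> (\<forall>x\<in>H. \<forall>y\<in>H. x + y \<in> H) \<and> (\<forall>x\<in>H. - x \<in> H)"

definition gen_subgroup :: "'g::group_add set \<Rightarrow> 'g set" where
  "gen_subgroup A = \<Inter>{H. is_subgroup H \<and> A \<subseteq> H}"

definition totally_disconnected_group :: "'g::topological_space itself \<Rightarrow> bool" where
  "totally_disconnected_group _ \<longleftrightarrow> (\<forall>x::'g. connected_component_set UNIV x = {x})"

definition tdlc :: "'g::{topological_group_add,t2_space} itself \<Rightarrow> bool" where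
  "tdlc T \<longleftrightarrow> totally_disconnected_group T \<and> locally_compact_space (euclidean :: 'g topology)"

definition compactly_generated :: "'g::{topological_group_add} itself \<Rightarrow> bool" where
  "compactly_generated _ \<longleftrightarrow> (\<exists>C::'g set. compact C \<and> gen_subgroup C = UNIV)"

definition generating_pair :: "'g::topological_group_add set \<Rightarrow> 'g set \<Rightarrow> bool" where
  "generating_pair K S \<longleftrightarrow> is_subgroup K \<and> compact K \<and> open K \<and>
     finite S \<and> uminus ` S = S \<and> S \<inter> K = {} \<and> gen_subgroup (S \<union> K) = UNIV"

definition lcoset :: "'g::group_add \<Rightarrow> 'g set \<Rightarrow> 'g set" where
  "lcoset g K = (\<lambda>k. g + k) ` K"

definition cosets :: "'g::group_add set \<Rightarrow> 'g set set" where
  "cosets K = range (\<lambda>g. lcoset g K)"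

definition act :: "'g::group_add \<Rightarrow> 'g set \<Rightarrow> 'g set" where
  "act g C = (\<lambda>x. g + x) ` C"

definition set_act :: "'g::group_add \<Rightarrow> 'g set set \<Rightarrow> 'g set set" where
  "set_act g B = act g ` B"

definition rc_edge :: "'g::group_add set \<Rightarrow> 'g set \<Rightarrow> 'g set \<Rightarrow> 'g set \<Rightarrow> bool" where
  "rc_edge K S x y \<longleftrightarrow> (\<exists>g s. s \<in> S \<and> x = lcoset g K \<and> y = lcoset (g + s) K)"

definition comps_after_removal :: "'v set \<Rightarrow> ('v \<Rightarrow> 'v \<Rightarrow> bool) \<Rightarrow> 'v set \<Rightarrow> 'v set set" where
  "comps_after_removal V E F =
     {C. \<exists>v \<in> V - F. C = {w. (\<lambda>a b. a \<in> V - F \<and> b \<in> V - F \<and> E a b)\<^sup>*\<^sup>* v w}}"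

definition ecard :: "'a set \<Rightarrow> enat" where
  "ecard A = (if finite A then enat (card A) else \<infinity>)"

definition num_ends :: "'v set \<Rightarrow> ('v \<Rightarrow> 'v \<Rightarrow> bool) \<Rightarrow> enat" where
  "num_ends V E = (SUP F \<in> {F. finite F \<and> F \<subseteq> V}.
       ecard {C \<in> comps_after_removal V E F. infinite C})"

definition almost_invariant :: "'g::group_add set \<Rightarrow> 'g set set \<Rightarrow> bool" where
  "almost_invariant K B \<longleftrightarrow> B \<subseteq> cosets K \<and> (\<forall>k\<in>K. set_act k B = B) \<and>
     (\<forall>g. finite ((set_act g B - B) \<union> (B - set_act g B)))"

definition proper_set :: "'g::group_add set \<Rightarrow> 'g set set \<Rightarrow> bool" where
  "proper_set K B \<longleftrightarrow> infinite B \<and> infinite (cosets K - B)"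

end

theory Submission
  imports Defs
begin

text \<open>Set B' = {gK | g\<inverse>K \<in> B}. An edge from gK to gsK of the rough Cayley graph leaving B'
forces g\<inverse>K \<in> B - sB; these finitely many cosets have compact union, which meets only
finitely many cosets of the open subgroup K, so only finitely many vertices of B' have an
edge leaving B'. Deleting them from the connected, locally finite graph leaves finitely
many components, and no component crosses from B' to its complement. Since B' and its
complement are infinite, each meets an infinite component, and these are distinct.\<close>

definition inner_boundary :: "('v \<Rightarrow> 'v \<Rightarrow> bool) \<Rightarrow> 'v set \<Rightarrow> 'v set" where
  "inner_boundary E B = {x \<in> B. \<exists>y. E x y \<and> y \<notin> B}"

lemma ecard_le_num_ends:
  assumes "finite F" "F \<subseteq> V"
  shows "ecard {C \<in> comps_after_removal V E F. infinite C} \<le> num_ends V E"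
  unfolding num_ends_def using assms by (intro SUP_upper) auto

lemma one_less_num_ends:
  assumes "finite F" "F \<subseteq> V"
    and "C1 \<in> comps_after_removal V E F" "C2 \<in> comps_after_removal V E F"
    and "infinite C1" "infinite C2" "C1 \<noteq> C2"
  shows "1 < num_ends V E"
proof -
  let ?Inf = "{C \<in> comps_after_removal V E F. infinite C}"
  have "2 \<le> ecard ?Inf"
  proof (cases "finite ?Inf")
    case True
    have "card {C1, C2} \<le> card ?Inf"
      using assms(3-6) True by (intro card_mono) auto
    with True \<open>C1 \<noteq> C2\<close> show ?thesis
      unfolding ecard_def by (simp add: numeral_eq_enat)
  qed (simp add: ecard_def)
  have "(1::enat) < 2" by (simp add: one_enat_def numeral_eq_enat)
  also note \<open>2 \<le> ecard ?Inf\<close>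
  also note ecard_le_num_ends[OF assms(1,2)]
  finally show ?thesis .
qed

locale connected_locally_finite_graph =
  fixes V :: "'v set" and E :: "'v \<Rightarrow> 'v \<Rightarrow> bool"
  assumes edge_vertices: "E x y \<Longrightarrow> x \<in> V \<and> y \<in> V"
    and edge_sym: "E x y \<Longrightarrow> E y x"
    and locally_finite: "finite {y. E x y}"
    and connected: "x \<in> V \<Longrightarrow> y \<in> V \<Longrightarrow> E\<^sup>*\<^sup>* x y"
begin

definition avoiding :: "'v set \<Rightarrow> 'v \<Rightarrow> 'v \<Rightarrow> bool" where
  "avoiding F a b \<longleftrightarrow> a \<in> V - F \<and> b \<in> V - F \<and> E a b"

lemma comps_after_removal_eq:
  "comps_after_removal V E F = (\<lambda>v. {w. (avoiding F)\<^sup>*\<^sup>* v w}) ` (V - F)"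
  unfolding comps_after_removal_def avoiding_def[abs_def] by auto

lemma avoiding_rtranclp_sym: "(avoiding F)\<^sup>*\<^sup>* a b \<Longrightarrow> (avoiding F)\<^sup>*\<^sup>* b a"
  by (rule sympD[OF symp_rtranclp]) (auto simp: symp_def avoiding_def intro: edge_sym)

lemma inner_boundary_nonempty:
  assumes "x \<in> B" "y \<in> V - B" "B \<subseteq> V"
  shows "inner_boundary E B \<noteq> {}"
proof -
  have "E\<^sup>*\<^sup>* a b \<Longrightarrow> a \<in> B \<Longrightarrow> b \<notin> B \<Longrightarrow> inner_boundary E B \<noteq> {}" for a b
  proof (induction rule: converse_rtranclp_induct)
    case (step a c)
    then show ?case unfolding inner_boundary_def by (cases "c \<in> B") auto
  qed simp
  then show ?thesis using connected assms by blast
qed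

text \<open>Follow a path from v to F up to the step before it first enters F.\<close>

lemma avoiding_path_to_neighbour:
  assumes "F \<noteq> {}" "F \<subseteq> V" "v \<in> V - F"
  shows "\<exists>n \<in> (\<Union>f\<in>F. {y. E f y}) - F. (avoiding F)\<^sup>*\<^sup>* n v"
proof -
  have "E\<^sup>*\<^sup>* a b \<Longrightarrow> a \<in> V - F \<Longrightarrow> b \<in> F \<Longrightarrow>
      \<exists>n \<in> (\<Union>f\<in>F. {y. E f y}) - F. (avoiding F)\<^sup>*\<^sup>* a n" for a b
  proof (induction rule: converse_rtranclp_induct)
    case (step a c)
    show ?case
    proof (cases "c \<in> F")
      case True
      then show ?thesis using step edge_sym by blast
    next
      case False
      then have "avoiding F a c" using step edge_vertices unfolding avoiding_def by auto
      then show ?thesis using step False edge_vertices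
        by (meson DiffI converse_rtranclp_into_rtranclp)
    qed
  qed simp
  moreover obtain f where "f \<in> F" using assms(1) by blast
  ultimately obtain n where "n \<in> (\<Union>f\<in>F. {y. E f y}) - F" "(avoiding F)\<^sup>*\<^sup>* v n"
    using assms(2,3) connected by blast
  then show ?thesis using avoiding_rtranclp_sym by blast
qed

lemma finite_comps_after_removal:
  assumes "finite F" "F \<noteq> {}" "F \<subseteq> V"
  shows "finite (comps_after_removal V E F)"
proof -
  let ?comp = "\<lambda>v. {w. (avoiding F)\<^sup>*\<^sup>* v w}"
  have "?comp v \<in> ?comp ` ((\<Union>f\<in>F. {y. E f y}) - F)" if v: "v \<in> V - F" for v
  proof -
    obtain n where n: "n \<in> (\<Union>f\<in>F. {y. E f y}) - F" "(avoiding F)\<^sup>*\<^sup>* n v"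
      using avoiding_path_to_neighbour[OF assms(2,3) v] by blast
    then have "?comp v = ?comp n"
      by (auto intro: rtranclp_trans avoiding_rtranclp_sym)
    with n(1) show ?thesis by blast
  qed
  then have "comps_after_removal V E F \<subseteq> ?comp ` ((\<Union>f\<in>F. {y. E f y}) - F)"
    unfolding comps_after_removal_eq by blast
  then show ?thesis
    by (rule finite_subset) (use assms(1) locally_finite in auto)
qed

lemma infinite_component_meeting:
  assumes "finite F" "F \<noteq> {}" "F \<subseteq> V" "X \<subseteq> V - F" "infinite X"
  obtains C where "C \<in> comps_after_removal V E F" "infinite (C \<inter> X)"
proof -
  have "X = (\<Union>C \<in> comps_after_removal V E F. C \<inter> X)"
    using assms(4) unfolding comps_after_removal_eq by auto
  then show ?thesis
    using that assms(5) finite_comps_after_removal[OF assms(1-3)] by (metis finite_UN_I)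
qed

lemma component_subset_if_meets:
  assumes "inner_boundary E B \<subseteq> F" "C \<in> comps_after_removal V E F" "x \<in> C \<inter> B"
  shows "C \<subseteq> B"
proof -
  have stay: "(avoiding F)\<^sup>*\<^sup>* a b \<Longrightarrow> a \<in> B \<Longrightarrow> b \<in> B" for a b
    by (induction rule: rtranclp_induct)
      (use assms(1) in \<open>auto simp: avoiding_def inner_boundary_def\<close>)
  obtain v where C: "C = {w. (avoiding F)\<^sup>*\<^sup>* v w}"
    using assms(2) unfolding comps_after_removal_eq by blast
  then have "v \<in> B" using assms(3) stay avoiding_rtranclp_sym by blast
  then show ?thesis using C stay by blast
qed

theorem one_less_num_ends_if_finite_inner_boundary:
  assumes "B \<subseteq> V" "infinite B" "infinite (V - B)" "finite (inner_boundary E B)"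
  shows "1 < num_ends V E"
proof -
  let ?F = "inner_boundary E B"
  have F: "finite ?F" "?F \<noteq> {}" "?F \<subseteq> V"
    using assms inner_boundary_nonempty[of _ B] unfolding inner_boundary_def
    by (auto dest!: infinite_imp_nonempty)
  obtain C1 where C1: "C1 \<in> comps_after_removal V E ?F" "infinite (C1 \<inter> (B - ?F))"
    using infinite_component_meeting[OF F, of "B - ?F"] assms by auto
  obtain C2 where C2: "C2 \<in> comps_after_removal V E ?F" "infinite (C2 \<inter> (V - B))"
    using infinite_component_meeting[OF F, of "V - B"] assms(3)
    unfolding inner_boundary_def by auto
  have "C1 \<subseteq> B"
    using component_subset_if_meets[OF order_refl C1(1)] C1(2) by (auto dest!: infinite_imp_nonempty)
  then have "C1 \<noteq> C2" using C2(2) by (auto dest!: infinite_imp_nonempty)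
  then show ?thesis
    using one_less_num_ends[OF F(1,3) C1(1) C2(1)] C1(2) C2(2) by (auto dest: infinite_super)
qed

end

lemma lcoset_mem: "is_subgroup K \<Longrightarrow> g \<in> lcoset g K"
  unfolding lcoset_def is_subgroup_def by (metis add.right_neutral image_eqI)

lemma lcoset_eq_of_mem:
  assumes "is_subgroup K" "h \<in> lcoset g K"
  shows "lcoset h K = lcoset g K"
proof -
  obtain k where k: "k \<in> K" "h = g + k" using assms(2) unfolding lcoset_def by auto
  have "g + j = h + (- k + j)" for j using k by (simp add: add.assoc[symmetric])
  moreover have "j \<in> K \<Longrightarrow> - k + j \<in> K" for j using k assms(1) unfolding is_subgroup_def by auto
  ultimately have "lcoset g K \<subseteq> lcoset h K" unfolding lcoset_def by auto
  moreover have "lcoset h K \<subseteq> lcoset g K"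
    using k assms(1) unfolding lcoset_def is_subgroup_def by (auto simp: add.assoc)
  ultimately show ?thesis by blast
qed

lemma act_lcoset: "act a (lcoset g K) = lcoset (a + g) K"
  unfolding act_def lcoset_def by (auto simp: image_image add.assoc)

lemma open_lcoset:
  fixes K :: "'g::topological_group_add set"
  assumes "open K"
  shows "open (lcoset g K)"
proof -
  have "lcoset g K = (\<lambda>x. - g + x) -` K"
    unfolding lcoset_def by (force simp: add.assoc[symmetric])
  then show ?thesis
    using assms by (simp add: open_vimage continuous_intros)
qed

lemma compact_lcoset:
  fixes K :: "'g::topological_group_add set"
  shows "compact K \<Longrightarrow> compact (lcoset g K)"
  unfolding lcoset_def by (intro compact_continuous_image continuous_intros)

text \<open>The cosets of an open subgroup are an open cover, so a compact set meets only
finitely many of them.\<close>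

lemma finite_lcosets_of_compact:
  fixes K :: "'g::topological_group_add set"
  assumes "is_subgroup K" "open K" "compact Z"
  shows "finite ((\<lambda>z. lcoset z K) ` Z)"
proof -
  have "Z \<subseteq> \<Union>((\<lambda>z. lcoset z K) ` Z)" using lcoset_mem[OF assms(1)] by auto
  then obtain D where D: "D \<subseteq> (\<lambda>z. lcoset z K) ` Z" "finite D" "Z \<subseteq> \<Union>D"
    using compactE[OF assms(3), of "(\<lambda>z. lcoset z K) ` Z"] open_lcoset[OF assms(2)] by blast
  have "lcoset z K \<in> D" if "z \<in> Z" for z
  proof -
    obtain C where "C \<in> D" "z \<in> C" using D(3) \<open>z \<in> Z\<close> by blast
    moreover obtain w where "C = lcoset w K" using D(1) \<open>C \<in> D\<close> by blast
    ultimately show ?thesis using lcoset_eq_of_mem[OF assms(1)] by metis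
  qed
  then have "(\<lambda>z. lcoset z K) ` Z \<subseteq> D" by blast
  then show ?thesis using D(2) by (rule finite_subset)
qed

lemma compact_Union_cosets:
  fixes K :: "'g::topological_group_add set"
  assumes "finite A" "A \<subseteq> cosets K" "compact K"
  shows "compact (\<Union>A)"
  using assms compact_lcoset unfolding cosets_def by (intro compact_Union) auto

lemma rc_edge_cosets: "rc_edge K S x y \<Longrightarrow> x \<in> cosets K \<and> y \<in> cosets K"
  unfolding rc_edge_def cosets_def by auto

lemma rc_edge_sym:
  assumes "uminus ` S = S" "rc_edge K S x y"
  shows "rc_edge K S y x"
proof -
  obtain g s where gs: "s \<in> S" "x = lcoset g K" "y = lcoset (g + s) K"
    using assms(2) unfolding rc_edge_def by auto
  have "- s \<in> S" using assms(1) gs(1) by force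
  moreover have "x = lcoset ((g + s) + - s) K" using gs by (simp add: add.assoc)
  ultimately show ?thesis using gs unfolding rc_edge_def by blast
qed

lemma rc_edge_act: "rc_edge K S x y \<Longrightarrow> rc_edge K S (act a x) (act a y)"
  unfolding rc_edge_def by (auto simp: act_lcoset add.assoc[symmetric]) (metis add.assoc)

lemma rtranclp_rc_edge_act:
  "(rc_edge K S)\<^sup>*\<^sup>* x y \<Longrightarrow> (rc_edge K S)\<^sup>*\<^sup>* (act a x) (act a y)"
  by (induction rule: rtranclp_induct) (auto intro: rtranclp.rtrancl_into_rtrancl rc_edge_act)

text \<open>The elements g with gK reachable from K form a subgroup containing S and K.\<close>

lemma rc_edge_connected:
  assumes gp: "generating_pair K S" and "x \<in> cosets K" "y \<in> cosets K"
  shows "(rc_edge K S)\<^sup>*\<^sup>* x y"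
proof -
  let ?E = "rc_edge K S"
  have K: "is_subgroup K" and sym: "symp ?E"
    using gp rc_edge_sym unfolding generating_pair_def symp_def by auto
  have rsym: "?E\<^sup>*\<^sup>* a b \<Longrightarrow> ?E\<^sup>*\<^sup>* b a" for a b by (rule sympD[OF symp_rtranclp[OF sym]])
  define H where "H = {g. ?E\<^sup>*\<^sup>* (lcoset 0 K) (lcoset g K)}"
  have "is_subgroup H"
    unfolding is_subgroup_def
  proof (intro conjI ballI)
    show "0 \<in> H" unfolding H_def by simp
  next
    fix a b assume "a \<in> H" "b \<in> H"
    then show "a + b \<in> H"
      using rtranclp_rc_edge_act[of K S "lcoset 0 K" "lcoset b K" a]
      unfolding H_def by (simp add: act_lcoset)
  next
    fix a assume "a \<in> H"
    then show "- a \<in> H"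
      using rtranclp_rc_edge_act[of K S "lcoset 0 K" "lcoset a K" "- a"] rsym
      unfolding H_def by (simp add: act_lcoset)
  qed
  moreover have "S \<subseteq> H"
    unfolding H_def rc_edge_def by (force intro: r_into_rtranclp)
  moreover have "K \<subseteq> H"
    using lcoset_eq_of_mem[OF K, of _ 0] unfolding H_def lcoset_def by force
  ultimately have "H = UNIV"
    using gp unfolding generating_pair_def gen_subgroup_def by auto
  moreover obtain a b where "x = lcoset a K" "y = lcoset b K"
    using assms(2,3) unfolding cosets_def by auto
  ultimately show ?thesis unfolding H_def by (metis UNIV_I mem_Collect_eq rsym rtranclp_trans)
qed

lemma rc_edge_locally_finite:
  fixes K :: "'g::topological_group_add set"
  assumes gp: "generating_pair K S"
  shows "finite {y. rc_edge K S x y}"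
proof (cases "x \<in> cosets K")
  case False
  then show ?thesis using rc_edge_cosets by (metis Collect_empty_eq finite.emptyI)
next
  case True
  then obtain g where g: "x = lcoset g K" unfolding cosets_def by auto
  have K: "is_subgroup K" "open K" "compact K" "finite S"
    using gp unfolding generating_pair_def by auto
  have "{y. rc_edge K S x y} \<subseteq> (\<Union>s\<in>S. (\<lambda>z. lcoset z K) ` ((\<lambda>k. g + k + s) ` K))"
  proof
    fix y assume "y \<in> {y. rc_edge K S x y}"
    then obtain h s where hs: "s \<in> S" "x = lcoset h K" "y = lcoset (h + s) K"
      unfolding rc_edge_def by auto
    then have "h \<in> lcoset g K" using g lcoset_mem[OF K(1)] by metis
    then obtain k where "k \<in> K" "h = g + k" unfolding lcoset_def by auto
    then show "y \<in> (\<Union>s\<in>S. (\<lambda>z. lcoset z K) ` ((\<lambda>k. g + k + s) ` K))" using hs by blast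
  qed
  moreover have "finite (\<Union>s\<in>S. (\<lambda>z. lcoset z K) ` ((\<lambda>k. g + k + s) ` K))"
    using K by (intro finite_UN_I finite_lcosets_of_compact compact_continuous_image continuous_intros) auto
  ultimately show ?thesis using finite_subset by blast
qed

lemma connected_locally_finite_graph_rc_edge:
  fixes K :: "'g::topological_group_add set"
  assumes "generating_pair K S"
  shows "connected_locally_finite_graph (cosets K) (rc_edge K S)"
proof unfold_locales
  show "rc_edge K S x y \<Longrightarrow> rc_edge K S y x" for x y
    using assms rc_edge_sym unfolding generating_pair_def by blast
qed (use assms rc_edge_cosets rc_edge_locally_finite rc_edge_connected in auto)

text \<open>Inversion gK \<mapsto> g\<inverse>K is not well defined on G/K, but it is on K-invariant sets
of cosets. It turns the left translation action into the right multiplication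
along which the edges of the rough Cayley graph run.\<close>

definition coset_inv :: "'g::group_add set \<Rightarrow> 'g set set \<Rightarrow> 'g set set" where
  "coset_inv K A = {lcoset g K | g. lcoset (- g) K \<in> A}"

lemma coset_inv_subset: "coset_inv K A \<subseteq> cosets K"
  unfolding coset_inv_def cosets_def by auto

lemma subset_coset_inv_coset_inv:
  assumes "A \<subseteq> cosets K"
  shows "A \<subseteq> coset_inv K (coset_inv K A)"
proof
  fix x assume "x \<in> A"
  then obtain c where c: "x = lcoset c K" using assms unfolding cosets_def by auto
  then have "lcoset (- c) K \<in> coset_inv K A"
    using \<open>x \<in> A\<close> unfolding coset_inv_def by (metis (mono_tags) CollectI minus_minus)
  then show "x \<in> coset_inv K (coset_inv K A)" using c unfolding coset_inv_def by blast
qed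

lemma mem_coset_inv_iff:
  assumes "is_subgroup K" "\<forall>k\<in>K. set_act k A = A"
  shows "lcoset h K \<in> coset_inv K A \<longleftrightarrow> lcoset (- h) K \<in> A"
proof
  assume "lcoset h K \<in> coset_inv K A"
  then obtain g where g: "lcoset h K = lcoset g K" "lcoset (- g) K \<in> A"
    unfolding coset_inv_def by auto
  then have "h \<in> lcoset g K" using lcoset_mem[OF assms(1)] by metis
  then obtain k where k: "k \<in> K" "h = g + k" unfolding lcoset_def by auto
  then have "- k \<in> K" using assms(1) unfolding is_subgroup_def by auto
  then have "act (- k) (lcoset (- g) K) \<in> A"
    using assms(2) g(2) unfolding set_act_def by blast
  then show "lcoset (- h) K \<in> A" using k by (simp add: act_lcoset minus_add)
qed (auto simp: coset_inv_def)

lemma coset_inv_Diff: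
  assumes "is_subgroup K" "\<forall>k\<in>K. set_act k A = A"
  shows "coset_inv K (cosets K - A) = cosets K - coset_inv K A"
proof (intro equalityI subsetI)
  fix x assume "x \<in> coset_inv K (cosets K - A)"
  then obtain g where "x = lcoset g K" "lcoset (- g) K \<notin> A" unfolding coset_inv_def by blast
  then show "x \<in> cosets K - coset_inv K A"
    using mem_coset_inv_iff[OF assms] unfolding cosets_def by auto
next
  fix x assume "x \<in> cosets K - coset_inv K A"
  then obtain g where "x = lcoset g K" "lcoset (- g) K \<notin> A"
    using mem_coset_inv_iff[OF assms] unfolding cosets_def by auto
  then show "x \<in> coset_inv K (cosets K - A)" unfolding coset_inv_def cosets_def by auto
qed

lemma finite_coset_inv:
  fixes K :: "'g::topological_group_add set"
  assumes "is_subgroup K" "open K" "compact K" "finite A" "A \<subseteq> cosets K"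
  shows "finite (coset_inv K A)"
proof -
  have "coset_inv K A \<subseteq> (\<lambda>z. lcoset z K) ` (uminus ` \<Union>A)"
  proof
    fix x assume "x \<in> coset_inv K A"
    then obtain g where g: "x = lcoset g K" "lcoset (- g) K \<in> A" unfolding coset_inv_def by blast
    then have "- g \<in> \<Union>A" using lcoset_mem[OF assms(1)] by blast
    then have "g \<in> uminus ` \<Union>A" by (metis image_eqI minus_minus)
    then show "x \<in> (\<lambda>z. lcoset z K) ` (uminus ` \<Union>A)" using g(1) by blast
  qed
  moreover have "finite ((\<lambda>z. lcoset z K) ` (uminus ` \<Union>A))"
    using assms compact_Union_cosets
    by (intro finite_lcosets_of_compact compact_continuous_image continuous_intros) auto
  ultimately show ?thesis by (rule finite_subset)
qed

lemma finite_coset_inv_iff: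
  fixes K :: "'g::topological_group_add set"
  assumes "is_subgroup K" "open K" "compact K" "A \<subseteq> cosets K"
  shows "finite (coset_inv K A) \<longleftrightarrow> finite A"
proof
  assume "finite (coset_inv K A)"
  then have "finite (coset_inv K (coset_inv K A))"
    using finite_coset_inv[OF assms(1-3) _ coset_inv_subset] by blast
  then show "finite A" using subset_coset_inv_coset_inv[OF assms(4)] by (rule finite_subset[rotated])
qed (use finite_coset_inv[OF assms(1-3) _ assms(4)] in blast)

lemma inner_boundary_coset_inv_subset:
  assumes "is_subgroup K" "\<forall>k\<in>K. set_act k B = B"
  shows "inner_boundary (rc_edge K S) (coset_inv K B) \<subseteq> (\<Union>s\<in>S. coset_inv K (B - set_act s B))"
proof
  fix x assume "x \<in> inner_boundary (rc_edge K S) (coset_inv K B)"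
  then obtain h s where hs: "s \<in> S" "x = lcoset h K"
    "lcoset h K \<in> coset_inv K B" "lcoset (h + s) K \<notin> coset_inv K B"
    unfolding inner_boundary_def rc_edge_def by blast
  have in_B: "lcoset (- h) K \<in> B" and not_in_B: "lcoset (- s + - h) K \<notin> B"
    using hs(3,4) mem_coset_inv_iff[OF assms] by (auto simp: minus_add)
  have "lcoset (- h) K \<notin> set_act s B"
  proof
    assume "lcoset (- h) K \<in> set_act s B"
    then obtain c where "c \<in> B" "lcoset (- h) K = act s c" unfolding set_act_def by auto
    moreover have "act (- s) (act s c) = c"
      unfolding act_def by (simp add: image_image add.assoc[symmetric])
    ultimately show False using not_in_B by (metis act_lcoset)
  qed
  then show "x \<in> (\<Union>s\<in>S. coset_inv K (B - set_act s B))"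
    using hs(1,2) in_B unfolding coset_inv_def by blast
qed

lemma finite_inner_boundary_coset_inv:
  fixes K :: "'g::topological_group_add set"
  assumes "generating_pair K S" "almost_invariant K B"
  shows "finite (inner_boundary (rc_edge K S) (coset_inv K B))"
proof (rule finite_subset[OF inner_boundary_coset_inv_subset])
  have K: "is_subgroup K" "open K" "compact K" "finite S"
    using assms(1) unfolding generating_pair_def by auto
  have B: "B \<subseteq> cosets K" "\<forall>k\<in>K. set_act k B = B" "\<And>g. finite (B - set_act g B)"
    using assms(2) unfolding almost_invariant_def by auto
  show "finite (\<Union>s\<in>S. coset_inv K (B - set_act s B))"
    using K B by (intro finite_UN_I finite_coset_inv) auto
qed (use assms in \<open>auto simp: generating_pair_def almost_invariant_def\<close>)

theorem lemma4p3:
  fixes K S :: "'g::{topological_group_add,t2_space} set"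
  assumes "tdlc TYPE('g)"
    and "compactly_generated TYPE('g)"
    and "generating_pair K S"
    and "\<exists>B. almost_invariant K B \<and> proper_set K B"
  shows "num_ends (cosets K) (rc_edge K S) > 1"
proof -
  obtain B where B: "almost_invariant K B" "proper_set K B" using assms(4) by blast
  have K: "is_subgroup K" "open K" "compact K"
    using assms(3) unfolding generating_pair_def by auto
  have B_cosets: "B \<subseteq> cosets K" and K_inv: "\<forall>k\<in>K. set_act k B = B"
    using B(1) unfolding almost_invariant_def by auto
  interpret connected_locally_finite_graph "cosets K" "rc_edge K S"
    using assms(3) by (rule connected_locally_finite_graph_rc_edge)
  show ?thesis
  proof (rule one_less_num_ends_if_finite_inner_boundary)
    show "coset_inv K B \<subseteq> cosets K" by (rule coset_inv_subset)
    show "infinite (coset_inv K B)"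
      using B(2) finite_coset_inv_iff[OF K B_cosets] unfolding proper_set_def by blast
    show "infinite (cosets K - coset_inv K B)"
      using B(2) finite_coset_inv_iff[OF K, of "cosets K - B"] coset_inv_Diff[OF K(1) K_inv]
      unfolding proper_set_def by auto
    show "finite (inner_boundary (rc_edge K S) (coset_inv K B))"
      using assms(3) B(1) by (rule finite_inner_boundary_coset_inv)
  qed
qed

end
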